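(* In the dyadic setting, suppose there are no covariates, the treatment $Y_{21}$ and the negative control exposure $Z$ are binary, Assumptions (L), (NC) hold, and Assumption (B) holds with a linear bridge $h(W,Y_{21};\gamma)=\gamma_0+\gamma_1W+\gamma_2Y_{21}$. Suppose moreover $\mathbb{E}(\mathrm{OD}_{WZ\mid Y_{21}})\neq 0$. Then $$\tau(1,0)=\mathbb{E}(\mathrm{OD}_{Y_{12}Y_{21}\mid Z})-\mathbb{E}(\mathrm{OD}_{WY_{21}\mid Z})\times\frac{\mathbb{E}(\mathrm{OD}_{Y_{12}Z\mid Y_{21}})}{\mathbb{E}(\mathrm{OD}_{WZ\mid Y_{21}})},$$ where for random variables $V_1,V_2,V_3$ with $V_2$ binary, $\mathrm{OD}_{V_1V_2\mid V_3}=\mathbb{E}(V_1\mid V_2=1,V_3,S=1)-\mathbb{E}(V_1\mid V_2=0,V_3,S=1)$ and the outer expectations are taken over the distribution of the conditioning variable given $S=1$.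
   Context: Dyadic setting: each observation is a pair (dyad) of units $k\in\{1,2\}$; $S=1$ if connected, and all analysis is conditional on $S=1$. $Y_{kt}$ is the focal behavior of unit $k$ at time $t\in\{1,2\}$; outcome $Y_{12}$, treatment $Y_{21}$; potential outcomes $Y_{12}(y_{21})$ with consistency $Y_{12}=Y_{12}(Y_{21})$ a.s.; $U$ unobserved; $W$, $Z$ observed auxiliary variables. ACPE: $\tau(y_{21},y_{21}')=\mathbb{E}\{Y_{12}(y_{21})-Y_{12}(y_{21}')\mid S=1\}$. Assumption (L): for all $y_{21}$, $Y_{12}(y_{21})\perp\!\!\!\perp Y_{21}\mid U,S=1$. Assumption (NC): $W\perp\!\!\!\perp Y_{21}\mid U,S=1$; $Z\perp\!\!\!\perp Y_{12}\mid Y_{21},U,S=1$; $Z\perp\!\!\!\perp W\mid Y_{21},U,S=1$. Assumption (B): for all $y_{21}$, $\mathbb{E}(Y_{12}\mid Y_{21}=y_{21},U,S=1)=\mathbb{E}\{h(W,y_{21})\mid Y_{21}=y_{21},U,S=1\}$ for the given function $h$. *)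

theory Defs
  imports "HOL-Probability.Probability"
begin

text \<open>All probabilities/expectations are taken under the measure M, which plays the
role of the law conditional on S = 1 (all analysis is conditional on S = 1).\<close>

definition gen_sigma :: "'a measure \<Rightarrow> ('a \<Rightarrow> 'c) \<Rightarrow> 'c measure \<Rightarrow> 'a measure" where
  "gen_sigma M C MC = vimage_algebra (space M) C MC"

definition cexp :: "'a measure \<Rightarrow> ('a \<Rightarrow> real) \<Rightarrow> ('a \<Rightarrow> 'c) \<Rightarrow> 'c measure \<Rightarrow> 'a \<Rightarrow> real" where
  "cexp M X C MC = real_cond_exp M (gen_sigma M C MC) X"

definition cond_indep ::
  "'a measure \<Rightarrow> ('a \<Rightarrow> 'b) \<Rightarrow> 'b measure \<Rightarrow> ('a \<Rightarrow> 'd) \<Rightarrow> 'd measure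
     \<Rightarrow> ('a \<Rightarrow> 'c) \<Rightarrow> 'c measure \<Rightarrow> bool" where
  "cond_indep M A MA B MB C MC \<longleftrightarrow>
     (\<forall>a\<in>sets MA. \<forall>b\<in>sets MB.
        AE x in M. cexp M (indicator {y\<in>space M. A y \<in> a \<and> B y \<in> b}) C MC x
                   = cexp M (indicator {y\<in>space M. A y \<in> a}) C MC x
                     * cexp M (indicator {y\<in>space M. B y \<in> b}) C MC x)"

definition cexp_event :: "'a measure \<Rightarrow> ('a \<Rightarrow> real) \<Rightarrow> 'a set \<Rightarrow> real" where
  "cexp_event M X A = (\<integral>x. indicator A x * X x \<partial>M) / measure M A"

definition OD :: "'a measure \<Rightarrow> ('a \<Rightarrow> real) \<Rightarrow> ('a \<Rightarrow> real) \<Rightarrow> ('a \<Rightarrow> real) \<Rightarrow> real \<Rightarrow> real" where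
  "OD M V1 V2 V3 v =
     cexp_event M V1 {x\<in>space M. V2 x = 1 \<and> V3 x = v}
   - cexp_event M V1 {x\<in>space M. V2 x = 0 \<and> V3 x = v}"

definition expected_OD :: "'a measure \<Rightarrow> ('a \<Rightarrow> real) \<Rightarrow> ('a \<Rightarrow> real) \<Rightarrow> ('a \<Rightarrow> real) \<Rightarrow> real" where
  "expected_OD M V1 V2 V3 =
     (\<Sum>v\<in>{0,1}. measure M {x\<in>space M. V3 x = v} * OD M V1 V2 V3 v)"

definition ACPE :: "'a measure \<Rightarrow> (real \<Rightarrow> 'a \<Rightarrow> real) \<Rightarrow> real \<Rightarrow> real \<Rightarrow> real" where
  "ACPE M Y12p y y' = (\<integral>x. Y12p y x - Y12p y' x \<partial>M)"

end

theory Submission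
  imports Defs
begin

text \<open>Given U, latent ignorability and the negative control condition on W let both the
potential outcome Y12(y) and the bridge h(W, y) factor against the indicator of Y21 = y; the
bridge equation, lifted from the finer conditioning on (Y21, U) down to U, then identifies their
conditional means, so positivity gives E Y12(y) = E h(W, y) = \<gamma>0 + \<gamma>1 E W + \<gamma>2 y and
\<tau>(1,0) = \<gamma>2. Conditioning on (Y21, U) instead, the remaining two negative control conditions make
the bridge equation survive restriction to Z = b, so in each of the four cells
E(Y12 | Y21 = a, Z = b) = \<gamma>0 + \<gamma>1 E(W | Y21 = a, Z = b) + \<gamma>2 a. Averaging the resulting
differences gives E OD(Y12,Y21|Z) = \<gamma>1 E OD(W,Y21|Z) + \<gamma>2 and
E OD(Y12,Z|Y21) = \<gamma>1 E OD(W,Z|Y21), and the second equation determines \<gamma>1.\<close>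

lemma subalgebra_gen_sigma:
  assumes "C \<in> measurable M MC"
  shows "subalgebra M (gen_sigma M C MC)"
  unfolding subalgebra_def gen_sigma_def
  using sets_image_in_sets[OF refl assms] by simp

lemma measurable_gen_sigma:
  assumes "C \<in> measurable M MC"
  shows "C \<in> measurable (gen_sigma M C MC) MC"
  unfolding gen_sigma_def
  by (rule measurable_vimage_algebra1) (use measurable_space[OF assms] in auto)

lemma subalgebra_gen_sigma_pair:
  assumes "Y \<in> measurable M MY" "U \<in> measurable M N"
  shows "subalgebra (gen_sigma M (\<lambda>x. (Y x, U x)) (MY \<Otimes>\<^sub>M N)) (gen_sigma M U N)"
proof -
  let ?FV = "gen_sigma M (\<lambda>x. (Y x, U x)) (MY \<Otimes>\<^sub>M N)"
  have "(\<lambda>x. (Y x, U x)) \<in> measurable ?FV (MY \<Otimes>\<^sub>M N)"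
    by (rule measurable_gen_sigma) (use assms in measurable)
  from measurable_compose[OF this measurable_snd] have "U \<in> measurable ?FV N" by simp
  then show ?thesis
    unfolding subalgebra_def gen_sigma_def
    using sets_image_in_sets[of ?FV "space M" U N] by (simp add: gen_sigma_def)
qed

lemma finite_measure_subalgebra_gen_sigma:
  assumes "finite_measure M" "C \<in> measurable M MC"
  shows "finite_measure_subalgebra M (gen_sigma M C MC)"
  by (intro finite_measure_subalgebra.intro finite_measure_subalgebra_axioms.intro assms
      subalgebra_gen_sigma)

lemma level_set_in_gen_sigma_pair:
  fixes T :: "'a \<Rightarrow> real"
  assumes "T \<in> borel_measurable M" "U \<in> measurable M N"
  shows "{x \<in> space M. T x = t} \<in> sets (gen_sigma M (\<lambda>x. (T x, U x)) (borel \<Otimes>\<^sub>M N))"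
proof -
  let ?FV = "gen_sigma M (\<lambda>x. (T x, U x)) (borel \<Otimes>\<^sub>M N)"
  have "(\<lambda>x. (T x, U x)) \<in> measurable ?FV (borel \<Otimes>\<^sub>M N)"
    by (rule measurable_gen_sigma) (use assms in measurable)
  from measurable_compose[OF this measurable_fst] have "T \<in> borel_measurable ?FV" by simp
  moreover have "space ?FV = space M" by (simp add: gen_sigma_def)
  ultimately have "T -` {t} \<inter> space M \<in> sets ?FV" using measurable_sets[of T ?FV borel "{t}"] by simp
  moreover have "{x \<in> space M. T x = t} = T -` {t} \<inter> space M" by auto
  ultimately show ?thesis by simp
qed

lemma integrable_mult_bounded:
  fixes f g :: "'a \<Rightarrow> real"
  assumes "integrable M f" "g \<in> borel_measurable M" "AE x in M. \<bar>g x\<bar> \<le> B"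
  shows "integrable M (\<lambda>x. g x * f x)"
proof (rule Bochner_Integration.integrable_bound)
  show "integrable M (\<lambda>x. B * f x)" using assms(1) by simp
  show "(\<lambda>x. g x * f x) \<in> borel_measurable M"
    using assms(1,2) borel_measurable_integrable by measurable
  show "AE x in M. norm (g x * f x) \<le> norm (B * f x)"
    using assms(3) by eventually_elim (auto simp: abs_mult intro: mult_right_mono)
qed

lemma (in finite_measure) integrable_indicator_real:
  "A \<in> sets M \<Longrightarrow> integrable M (indicator A :: 'a \<Rightarrow> real)"
  by (rule integrable_const_bound[where B=1]) auto

lemma (in finite_measure) integral_mult_eq_0_if_orthogonal_to_preimages:
  fixes X h :: "'a \<Rightarrow> real"
  assumes [measurable]: "X \<in> borel_measurable M" "h \<in> borel_measurable M"
    and ih: "integrable M h" and iXh: "integrable M (\<lambda>x. X x * h x)"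
    and orth: "\<And>a. a \<in> sets borel \<Longrightarrow> (\<integral>x. indicator (X -` a \<inter> space M) x * h x \<partial>M) = 0"
  shows "(\<integral>x. X x * h x \<partial>M) = 0"
proof -
  let ?F = "gen_sigma M X borel"
  interpret F: finite_measure_subalgebra M ?F
    by (rule finite_measure_subalgebra_gen_sigma) (unfold_locales, measurable)
  have XF: "X \<in> borel_measurable ?F" by (rule measurable_gen_sigma) measurable
  have "AE x in M. real_cond_exp M ?F h x = 0"
  proof (rule F.real_cond_exp_charact)
    fix A assume "A \<in> sets ?F"
    then obtain a where "a \<in> sets borel" "A = X -` a \<inter> space M"
      unfolding gen_sigma_def by (subst (asm) sets_vimage_algebra2) auto
    then show "(\<integral>x\<in>A. h x \<partial>M) = (\<integral>x\<in>A. 0 \<partial>M)"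
      using orth by (simp add: set_lebesgue_integral_def)
  qed (use ih in auto)
  then have "(\<integral>x. X x * real_cond_exp M ?F h x \<partial>M) = (\<integral>x. 0 \<partial>M)"
    by (intro integral_cong_AE) (auto elim: eventually_mono)
  moreover have "(\<integral>x. X x * real_cond_exp M ?F h x \<partial>M) = (\<integral>x. X x * h x \<partial>M)"
    by (rule F.real_cond_exp_intg(2)[OF iXh XF]) measurable
  ultimately show ?thesis by simp
qed

lemma (in finite_measure_subalgebra) real_cond_exp_indicator_bounds:
  assumes "E \<in> sets M"
  shows "AE x in M. 0 \<le> real_cond_exp M F (indicator E) x \<and> real_cond_exp M F (indicator E) x \<le> 1"
proof -
  have "AE x in M. 0 \<le> real_cond_exp M F (indicator E) x"
    by (rule real_cond_exp_ge_c[OF integrable_indicator_real[OF assms]]) auto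
  moreover have "AE x in M. real_cond_exp M F (indicator E) x \<le> 1"
    by (rule real_cond_exp_le_c[OF integrable_indicator_real[OF assms]]) (auto simp: indicator_def)
  ultimately show ?thesis by eventually_elim auto
qed

text \<open>The definition of conditional independence only factorises conditional probabilities of
events. To factor E(X 1_E | F) for an integrable X, note that h = 1_A (1_E - P(E | F)) with
A \<in> F integrates to zero against every indicator of \<sigma>(X), hence against X itself.\<close>

lemma (in finite_measure_subalgebra) integral_indicator_mult_factor:
  fixes X :: "'a \<Rightarrow> real"
  assumes X[measurable]: "X \<in> borel_measurable M" and iX: "integrable M X"
    and E[measurable]: "E \<in> sets M" and AF: "A \<in> sets F"
    and indep: "\<And>a. a \<in> sets borel \<Longrightarrow> AE x in M.
        real_cond_exp M F (indicator (X -` a \<inter> space M \<inter> E)) x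
        = real_cond_exp M F (indicator (X -` a \<inter> space M)) x * real_cond_exp M F (indicator E) x"
  shows "(\<integral>x. (indicator A x * indicator E x) * X x \<partial>M)
       = (\<integral>x. (indicator A x * real_cond_exp M F (indicator E) x) * X x \<partial>M)"
proof -
  define c where "c = real_cond_exp M F (indicator E)"
  have cF[measurable]: "c \<in> borel_measurable F" unfolding c_def by simp
  have cM[measurable]: "c \<in> borel_measurable M" unfolding c_def by simp
  have c_range: "AE x in M. 0 \<le> c x \<and> c x \<le> 1"
    unfolding c_def by (rule real_cond_exp_indicator_bounds[OF E])
  have A[measurable]: "A \<in> sets M" using AF subalg by (auto simp: subalgebra_def)
  have AcF[measurable]: "(\<lambda>x. indicator A x * c x) \<in> borel_measurable F" using AF by measurable
  have int_Ac: "integrable M (\<lambda>x. (indicator A x * c x) * f x)" if "integrable M f" for f :: "'a \<Rightarrow> real"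
    by (rule integrable_mult_bounded[OF that, where B=1])
       (use c_range in \<open>auto simp: indicator_def elim!: eventually_mono[OF c_range]\<close>)
  have int_AE: "integrable M (\<lambda>x. (indicator A x * indicator E x) * f x)" if "integrable M f" for f :: "'a \<Rightarrow> real"
    by (rule integrable_mult_bounded[OF that, where B=1]) (auto simp: indicator_def)
  define h where "h x = indicator A x * indicator E x - indicator A x * c x" for x
  have h_bound: "AE x in M. \<bar>h x\<bar> \<le> 1"
    using c_range by eventually_elim (auto simp: h_def indicator_def)
  have "(\<integral>x. X x * h x \<partial>M) = 0"
  proof (rule integral_mult_eq_0_if_orthogonal_to_preimages[OF X])
    show "h \<in> borel_measurable M" unfolding h_def by measurable
    show "integrable M h"
      using integrable_mult_bounded[OF integrable_const[of "1::real"] _ h_bound] unfolding h_def by simp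
    show "integrable M (\<lambda>x. X x * h x)"
      using integrable_mult_bounded[OF iX _ h_bound] unfolding h_def by (simp add: mult.commute)
    fix a :: "real set" assume a: "a \<in> sets borel"
    define S where "S = X -` a \<inter> space M"
    have S[measurable]: "S \<in> sets M" unfolding S_def using a by measurable
    have "(\<integral>x. indicator A x * indicator (S \<inter> E) x \<partial>M)
        = (\<integral>x. indicator A x * real_cond_exp M F (indicator (S \<inter> E)) x \<partial>M)"
      by (rule real_cond_exp_intg(2)[symmetric])
         (use AF in \<open>auto intro!: integrable_indicator_real simp: indicator_inter_arith[symmetric]\<close>)
    also have "\<dots> = (\<integral>x. (indicator A x * c x) * real_cond_exp M F (indicator S) x \<partial>M)"
      using indep[OF a] by (intro integral_cong_AE) (auto simp: S_def c_def elim!: eventually_mono)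
    also have "\<dots> = (\<integral>x. (indicator A x * c x) * indicator S x \<partial>M)"
      by (rule real_cond_exp_intg(2)) (use int_Ac[OF integrable_indicator_real[OF S]] in auto)
    finally show "(\<integral>x. indicator S x * h x \<partial>M) = 0"
      using int_Ac[OF integrable_indicator_real[OF S]] int_AE[OF integrable_indicator_real[OF S]]
      by (simp add: h_def right_diff_distrib indicator_inter_arith mult_ac)
  qed
  moreover have "(\<integral>x. X x * h x \<partial>M)
      = (\<integral>x. (indicator A x * indicator E x) * X x \<partial>M) - (\<integral>x. (indicator A x * c x) * X x \<partial>M)"
    by (subst Bochner_Integration.integral_diff[OF int_AE[OF iX] int_Ac[OF iX], symmetric])
       (simp add: h_def algebra_simps)
  ultimately show ?thesis unfolding c_def by simp
qed

lemma (in finite_measure_subalgebra) real_cond_exp_mult_indicator_factor: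
  fixes X :: "'a \<Rightarrow> real"
  assumes X[measurable]: "X \<in> borel_measurable M" and iX: "integrable M X"
    and E[measurable]: "E \<in> sets M"
    and indep: "\<And>a. a \<in> sets borel \<Longrightarrow> AE x in M.
        real_cond_exp M F (indicator (X -` a \<inter> space M \<inter> E)) x
        = real_cond_exp M F (indicator (X -` a \<inter> space M)) x * real_cond_exp M F (indicator E) x"
  shows "AE x in M. real_cond_exp M F (\<lambda>x. X x * indicator E x) x
          = real_cond_exp M F X x * real_cond_exp M F (indicator E) x"
proof -
  define c where "c = real_cond_exp M F (indicator E)"
  have cF[measurable]: "c \<in> borel_measurable F" unfolding c_def by simp
  have cM[measurable]: "c \<in> borel_measurable M" unfolding c_def by simp
  have c_bound: "AE x in M. \<bar>c x\<bar> \<le> 1"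
    using real_cond_exp_indicator_bounds[OF E] unfolding c_def by eventually_elim auto
  show ?thesis
    unfolding c_def[symmetric]
  proof (rule real_cond_exp_charact)
    fix A assume AF: "A \<in> sets F"
    have AcF[measurable]: "(\<lambda>x. indicator A x * c x) \<in> borel_measurable F" using AF by measurable
    have "A \<in> sets M" using AF subalg by (auto simp: subalgebra_def)
    then have "integrable M (\<lambda>x. (indicator A x * c x) * X x)"
      by (intro integrable_mult_bounded[OF iX, where B=1])
         (use c_bound in \<open>auto simp: indicator_def elim!: eventually_mono\<close>)
    from real_cond_exp_intg(2)[OF this AcF X]
    have "(\<integral>x\<in>A. real_cond_exp M F X x * c x \<partial>M) = (\<integral>x. (indicator A x * c x) * X x \<partial>M)"
      by (simp add: set_lebesgue_integral_def mult_ac)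
    with integral_indicator_mult_factor[OF X iX E AF indep]
    show "(\<integral>x\<in>A. X x * indicator E x \<partial>M) = (\<integral>x\<in>A. real_cond_exp M F X x * c x \<partial>M)"
      by (simp add: set_lebesgue_integral_def mult_ac c_def)
  next
    show "integrable M (\<lambda>x. X x * indicator E x)"
      using integrable_real_mult_indicator[OF E iX] .
    show "integrable M (\<lambda>x. real_cond_exp M F X x * c x)"
      using integrable_mult_bounded[OF real_cond_exp_int(1)[OF iX] cM c_bound] by (simp add: mult.commute)
  qed measurable
qed

lemma (in finite_measure_subalgebra) real_cond_exp_mult_indicator_cong:
  fixes f g :: "'a \<Rightarrow> real"
  assumes f: "integrable M f" and g: "integrable M g" and G: "G \<in> sets F"
    and eq: "AE x in M. x \<in> G \<longrightarrow> real_cond_exp M F f x = real_cond_exp M F g x"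
  shows "AE x in M. real_cond_exp M F (\<lambda>x. f x * indicator G x) x
                  = real_cond_exp M F (\<lambda>x. g x * indicator G x) x"
proof -
  have GM: "G \<in> sets M" using G subalg by (auto simp: subalgebra_def)
  have GF[measurable]: "(indicator G :: 'a \<Rightarrow> real) \<in> borel_measurable F" using G by simp
  have "AE x in M. real_cond_exp M F (\<lambda>x. indicator G x * h x) x = indicator G x * real_cond_exp M F h x"
    if "integrable M h" for h :: "'a \<Rightarrow> real"
    using that integrable_real_mult_indicator[OF GM that]
    by (intro real_cond_exp_mult) (auto simp: mult.commute)
  from this[OF f] this[OF g] eq show ?thesis
    by eventually_elim (auto simp: mult.commute indicator_def)
qed

lemma (in finite_measure_subalgebra) real_cond_exp_eq_nested_subalg:
  fixes f g :: "'a \<Rightarrow> real"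
  assumes G: "subalgebra M G" "subalgebra G F"
    and f[measurable]: "integrable M f" and g[measurable]: "integrable M g"
    and eq: "AE x in M. real_cond_exp M G f x = real_cond_exp M G g x"
  shows "AE x in M. real_cond_exp M F f x = real_cond_exp M F g x"
proof -
  have "AE x in M. real_cond_exp M F (real_cond_exp M G f) x = real_cond_exp M F (real_cond_exp M G g) x"
    using eq by (rule real_cond_exp_cong) simp_all
  with real_cond_exp_nested_subalg[OF G f] real_cond_exp_nested_subalg[OF G g] show ?thesis
    by eventually_elim simp
qed

lemma (in finite_measure_subalgebra) integral_eq_if_real_cond_exp_eq:
  fixes f g :: "'a \<Rightarrow> real"
  assumes "integrable M f" "integrable M g"
    and "AE x in M. real_cond_exp M F f x = real_cond_exp M F g x"
  shows "(\<integral>x. f x \<partial>M) = (\<integral>x. g x \<partial>M)"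
proof -
  have "(\<integral>x. real_cond_exp M F f x \<partial>M) = (\<integral>x. real_cond_exp M F g x \<partial>M)"
    by (rule integral_cong_AE) (use assms(3) in simp_all)
  then show ?thesis using real_cond_exp_int(2) assms(1,2) by simp
qed

lemma cond_indep_commute:
  "cond_indep M A MA B MB C MC \<Longrightarrow> cond_indep M B MB A MA C MC"
  unfolding cond_indep_def by (simp add: conj_commute mult.commute)

lemma cond_indep_compose_left:
  assumes ci: "cond_indep M A MA B MB C MC"
    and A: "A \<in> measurable M MA" and f: "f \<in> measurable MA MF"
  shows "cond_indep M (\<lambda>x. f (A x)) MF B MB C MC"
  unfolding cond_indep_def
proof (intro ballI)
  fix a b assume a: "a \<in> sets MF" and b: "b \<in> sets MB"
  have fa: "f -` a \<inter> space MA \<in> sets MA" using measurable_sets[OF f a] .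
  have sets_eq: "{y \<in> space M. f (A y) \<in> a} = {y \<in> space M. A y \<in> f -` a \<inter> space MA}"
    "{y \<in> space M. f (A y) \<in> a \<and> B y \<in> b} = {y \<in> space M. A y \<in> f -` a \<inter> space MA \<and> B y \<in> b}"
    using measurable_space[OF A] by auto
  have "AE x in M. cexp M (indicator {y \<in> space M. A y \<in> f -` a \<inter> space MA \<and> B y \<in> b}) C MC x
      = cexp M (indicator {y \<in> space M. A y \<in> f -` a \<inter> space MA}) C MC x
        * cexp M (indicator {y \<in> space M. B y \<in> b}) C MC x"
    using ci fa b unfolding cond_indep_def by blast
  then show "AE x in M. cexp M (indicator {y \<in> space M. f (A y) \<in> a \<and> B y \<in> b}) C MC x
      = cexp M (indicator {y \<in> space M. f (A y) \<in> a}) C MC x * cexp M (indicator {y \<in> space M. B y \<in> b}) C MC x"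
    by (simp only: sets_eq)
qed

lemma cond_indep_compose_right:
  assumes "cond_indep M A MA B MB C MC" "B \<in> measurable M MB" "f \<in> measurable MB MF"
  shows "cond_indep M A MA (\<lambda>x. f (B x)) MF C MC"
  using cond_indep_commute[OF cond_indep_compose_left[OF cond_indep_commute[OF assms(1)] assms(2,3)]] .

lemma cexp_mult_indicator_factor:
  fixes X :: "'a \<Rightarrow> real"
  assumes "finite_measure M" and C: "C \<in> measurable M MC"
    and X[measurable]: "X \<in> borel_measurable M" and iX: "integrable M X"
    and B[measurable]: "B \<in> measurable M MB" and b[measurable]: "b \<in> sets MB"
    and ci: "cond_indep M X borel B MB C MC"
  shows "AE x in M. cexp M (\<lambda>x. X x * indicator {y\<in>space M. B y \<in> b} x) C MC x
                  = cexp M X C MC x * cexp M (indicator {y\<in>space M. B y \<in> b}) C MC x"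
proof -
  interpret finite_measure_subalgebra M "gen_sigma M C MC"
    by (rule finite_measure_subalgebra_gen_sigma[OF assms(1) C])
  show ?thesis
    unfolding cexp_def
  proof (rule real_cond_exp_mult_indicator_factor[OF X iX])
    fix a :: "real set" assume "a \<in> sets borel"
    with ci have "AE x in M. cexp M (indicator {y\<in>space M. X y \<in> a \<and> B y \<in> b}) C MC x
       = cexp M (indicator {y\<in>space M. X y \<in> a}) C MC x * cexp M (indicator {y\<in>space M. B y \<in> b}) C MC x"
      unfolding cond_indep_def using b by blast
    moreover have "{y\<in>space M. X y \<in> a \<and> B y \<in> b} = X -` a \<inter> space M \<inter> {y\<in>space M. B y \<in> b}"
      and "{y\<in>space M. X y \<in> a} = X -` a \<inter> space M" by auto
    ultimately show "AE x in M. real_cond_exp M (gen_sigma M C MC) (indicator (X -` a \<inter> space M \<inter> {y\<in>space M. B y \<in> b})) x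
       = real_cond_exp M (gen_sigma M C MC) (indicator (X -` a \<inter> space M)) x
         * real_cond_exp M (gen_sigma M C MC) (indicator {y\<in>space M. B y \<in> b}) x"
      unfolding cexp_def by simp
  qed measurable
qed

lemma integral_potential_outcome_eq_bridge:
  fixes U :: "'a \<Rightarrow> 'u" and T Y Yt H :: "'a \<Rightarrow> real" and t :: real
  assumes M: "finite_measure M" and U[measurable]: "U \<in> measurable M N"
    and T[measurable]: "T \<in> borel_measurable M"
    and Y[measurable]: "Y \<in> borel_measurable M" and iY: "integrable M Y"
    and Yt[measurable]: "Yt \<in> borel_measurable M" and iYt: "integrable M Yt"
    and H[measurable]: "H \<in> borel_measurable M" and iH: "integrable M H"
    and consistency: "AE x in M. T x = t \<longrightarrow> Y x = Yt x"
    and positivity: "AE x in M. 0 < cexp M (indicator {x\<in>space M. T x = t}) U N x"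
    and latent_ignorability: "cond_indep M Yt borel T borel U N"
    and negative_control: "cond_indep M H borel T borel U N"
    and bridge: "AE x in M. T x = t \<longrightarrow>
        cexp M Y (\<lambda>x. (T x, U x)) (borel \<Otimes>\<^sub>M N) x = cexp M H (\<lambda>x. (T x, U x)) (borel \<Otimes>\<^sub>M N) x"
  shows "(\<integral>x. Yt x \<partial>M) = (\<integral>x. H x \<partial>M)"
proof -
  define FU where "FU = gen_sigma M U N"
  define FV where "FV = gen_sigma M (\<lambda>x. (T x, U x)) (borel \<Otimes>\<^sub>M N)"
  have V: "(\<lambda>x. (T x, U x)) \<in> measurable M (borel \<Otimes>\<^sub>M N)" by measurable
  interpret FU: finite_measure_subalgebra M FU
    unfolding FU_def by (rule finite_measure_subalgebra_gen_sigma[OF M U])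
  interpret FV: finite_measure_subalgebra M FV
    unfolding FV_def by (rule finite_measure_subalgebra_gen_sigma[OF M V])
  define G where "G = {x \<in> space M. T x = t}"
  have G_FV: "G \<in> sets FV" unfolding G_def FV_def by (rule level_set_in_gen_sigma_pair[OF T U])
  have G_eq: "G = {x \<in> space M. T x \<in> {t}}" by (auto simp: G_def)
  define p where "p = real_cond_exp M FU (indicator G)"
  have factor_Yt: "AE x in M. real_cond_exp M FU (\<lambda>x. Yt x * indicator G x) x = real_cond_exp M FU Yt x * p x"
    using cexp_mult_indicator_factor[OF M U Yt iYt T _ latent_ignorability, of "{t}"]
    by (simp add: cexp_def FU_def p_def G_eq)
  have factor_H: "AE x in M. real_cond_exp M FU (\<lambda>x. H x * indicator G x) x = real_cond_exp M FU H x * p x"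
    using cexp_mult_indicator_factor[OF M U H iH T _ negative_control, of "{t}"]
    by (simp add: cexp_def FU_def p_def G_eq)
  have "AE x in M. real_cond_exp M FU (\<lambda>x. Yt x * indicator G x) x = real_cond_exp M FU (\<lambda>x. Y x * indicator G x) x"
    by (rule FU.real_cond_exp_cong) (use consistency in \<open>auto simp: G_def indicator_def elim!: eventually_mono\<close>)
  moreover have "AE x in M. real_cond_exp M FU (\<lambda>x. Y x * indicator G x) x = real_cond_exp M FU (\<lambda>x. H x * indicator G x) x"
  proof (rule FU.real_cond_exp_eq_nested_subalg[OF FV.subalg])
    show "subalgebra FV FU" unfolding FV_def FU_def by (rule subalgebra_gen_sigma_pair[OF T U])
    show "AE x in M. real_cond_exp M FV (\<lambda>x. Y x * indicator G x) x = real_cond_exp M FV (\<lambda>x. H x * indicator G x) x"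
      by (rule FV.real_cond_exp_mult_indicator_cong[OF iY iH G_FV])
         (use bridge in \<open>auto simp: cexp_def FV_def G_def elim!: eventually_mono\<close>)
  qed (use iY iH G_def in \<open>auto intro!: integrable_real_mult_indicator\<close>)
  ultimately have "AE x in M. real_cond_exp M FU Yt x = real_cond_exp M FU H x"
    using factor_Yt factor_H positivity by eventually_elim (simp add: cexp_def FU_def p_def G_def)
  then show ?thesis by (rule FU.integral_eq_if_real_cond_exp_eq[OF iYt iH])
qed

lemma cexp_event_cell_eq_bridge:
  fixes U :: "'a \<Rightarrow> 'u" and T Z Y H :: "'a \<Rightarrow> real" and t z :: real
  assumes M: "finite_measure M" and U[measurable]: "U \<in> measurable M N"
    and T[measurable]: "T \<in> borel_measurable M" and Z[measurable]: "Z \<in> borel_measurable M"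
    and Y[measurable]: "Y \<in> borel_measurable M" and iY: "integrable M Y"
    and H[measurable]: "H \<in> borel_measurable M" and iH: "integrable M H"
    and nc_outcome: "cond_indep M Z borel Y borel (\<lambda>x. (T x, U x)) (borel \<Otimes>\<^sub>M N)"
    and nc_bridge: "cond_indep M Z borel H borel (\<lambda>x. (T x, U x)) (borel \<Otimes>\<^sub>M N)"
    and bridge: "AE x in M. T x = t \<longrightarrow>
        cexp M Y (\<lambda>x. (T x, U x)) (borel \<Otimes>\<^sub>M N) x = cexp M H (\<lambda>x. (T x, U x)) (borel \<Otimes>\<^sub>M N) x"
  shows "cexp_event M Y {x \<in> space M. T x = t \<and> Z x = z} = cexp_event M H {x \<in> space M. T x = t \<and> Z x = z}"
proof -
  define FV where "FV = gen_sigma M (\<lambda>x. (T x, U x)) (borel \<Otimes>\<^sub>M N)"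
  have V: "(\<lambda>x. (T x, U x)) \<in> measurable M (borel \<Otimes>\<^sub>M N)" by measurable
  interpret FV: finite_measure_subalgebra M FV
    unfolding FV_def by (rule finite_measure_subalgebra_gen_sigma[OF M V])
  define G where "G = {x \<in> space M. T x = t}"
  have G_FV: "G \<in> sets FV" unfolding G_def FV_def by (rule level_set_in_gen_sigma_pair[OF T U])
  define E where "E = {x \<in> space M. Z x = z}"
  have E[measurable]: "E \<in> sets M" unfolding E_def by measurable
  have E_eq: "E = {x \<in> space M. Z x \<in> {z}}" by (auto simp: E_def)
  have factor_Y: "AE x in M. real_cond_exp M FV (\<lambda>x. Y x * indicator E x) x
      = real_cond_exp M FV Y x * real_cond_exp M FV (indicator E) x"
    using cexp_mult_indicator_factor[OF M V Y iY Z _ cond_indep_commute[OF nc_outcome], of "{z}"]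
    by (simp add: cexp_def FV_def E_eq)
  have factor_H: "AE x in M. real_cond_exp M FV (\<lambda>x. H x * indicator E x) x
      = real_cond_exp M FV H x * real_cond_exp M FV (indicator E) x"
    using cexp_mult_indicator_factor[OF M V H iH Z _ cond_indep_commute[OF nc_bridge], of "{z}"]
    by (simp add: cexp_def FV_def E_eq)
  have iYE: "integrable M (\<lambda>x. Y x * indicator E x)" by (rule integrable_real_mult_indicator[OF E iY])
  have iHE: "integrable M (\<lambda>x. H x * indicator E x)" by (rule integrable_real_mult_indicator[OF E iH])
  have "AE x in M. real_cond_exp M FV (\<lambda>x. Y x * indicator E x * indicator G x) x
                 = real_cond_exp M FV (\<lambda>x. H x * indicator E x * indicator G x) x"
    by (rule FV.real_cond_exp_mult_indicator_cong[OF iYE iHE G_FV])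
       (use factor_Y factor_H bridge in \<open>eventually_elim, simp add: cexp_def FV_def G_def\<close>)
  then have "(\<integral>x. Y x * indicator E x * indicator G x \<partial>M) = (\<integral>x. H x * indicator E x * indicator G x \<partial>M)"
    using FV.subalg by (intro FV.integral_eq_if_real_cond_exp_eq)
      (auto intro!: integrable_real_mult_indicator iYE iHE simp: G_def subalgebra_def)
  moreover have "indicator {x \<in> space M. T x = t \<and> Z x = z} x = (indicator E x * indicator G x :: real)" for x
    by (auto simp: E_def G_def indicator_def)
  ultimately show ?thesis by (simp add: cexp_event_def mult_ac)
qed

lemma cexp_indicator_Diff:
  assumes "prob_space M" "C \<in> measurable M MC" and E[measurable]: "E \<in> sets M"
  shows "AE x in M. cexp M (indicator (space M - E)) C MC x = 1 - cexp M (indicator E) C MC x"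
proof -
  interpret prob_space M by (rule assms(1))
  interpret F: finite_measure_subalgebra M "gen_sigma M C MC"
    by (rule finite_measure_subalgebra_gen_sigma[OF finite_measure assms(2)])
  let ?rce = "real_cond_exp M (gen_sigma M C MC)"
  have "AE x in M. ?rce (indicator (space M - E)) x = ?rce (\<lambda>x. 1 - indicator E x) x"
    by (rule F.real_cond_exp_cong) (auto simp: indicator_def)
  moreover have "AE x in M. ?rce (\<lambda>x. 1 - indicator E x) x = ?rce (\<lambda>x. 1) x - ?rce (indicator E) x"
    by (rule F.real_cond_exp_diff[OF integrable_const integrable_indicator_real[OF E]])
  moreover have "AE x in M. ?rce (\<lambda>x. 1) x = 1"
    by (rule F.real_cond_exp_F_meas) simp_all
  ultimately show ?thesis
    unfolding cexp_def by eventually_elim simp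
qed

lemma cexp_indicator_binary_pos:
  fixes T :: "'a \<Rightarrow> real"
  assumes "prob_space M" "C \<in> measurable M MC" "T \<in> borel_measurable M"
    and "\<forall>x\<in>space M. T x \<in> {0,1}"
    and "AE x in M. 0 < cexp M (indicator {x \<in> space M. T x = 1}) C MC x
                  \<and> cexp M (indicator {x \<in> space M. T x = 1}) C MC x < 1"
    and "t \<in> {0,1}"
  shows "AE x in M. 0 < cexp M (indicator {x \<in> space M. T x = t}) C MC x"
proof -
  have "{x \<in> space M. T x = 1} \<in> sets M" using assms(3) by measurable
  moreover have "space M - {x \<in> space M. T x = 1} = {x \<in> space M. T x = 0}" using assms(4) by auto
  ultimately show ?thesis
    using cexp_indicator_Diff[OF assms(1,2), of "{x \<in> space M. T x = 1}"] assms(5,6)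
    by (auto elim: eventually_rev_mp)
qed

lemma cexp_event_affine:
  fixes W :: "'a \<Rightarrow> real"
  assumes "finite_measure M" "integrable M W" "A \<in> sets M" "measure M A \<noteq> 0"
  shows "cexp_event M (\<lambda>x. \<alpha> + \<beta> * W x) A = \<alpha> + \<beta> * cexp_event M W A"
proof -
  interpret finite_measure M by (rule assms(1))
  have "(\<integral>x. indicator A x * (\<alpha> + \<beta> * W x) \<partial>M) = (\<integral>x. \<alpha> * indicator A x + \<beta> * (indicator A x * W x) \<partial>M)"
    by (simp add: algebra_simps)
  also have "\<dots> = \<alpha> * measure M A + \<beta> * (\<integral>x. indicator A x * W x \<partial>M)"
    using integrable_indicator_real[OF assms(3)] integrable_real_mult_indicator[OF assms(3,2)]
    by (subst Bochner_Integration.integral_add) (auto simp: mult.commute sets.Int_space_eq2[OF assms(3)])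
  finally show ?thesis
    unfolding cexp_event_def using assms(4) by (simp add: add_divide_distrib)
qed

lemma measure_binary_level_sets:
  fixes Z :: "'a \<Rightarrow> real"
  assumes "prob_space M" "Z \<in> borel_measurable M" "\<forall>x\<in>space M. Z x \<in> {0,1}"
  shows "measure M {x \<in> space M. Z x = 0} + measure M {x \<in> space M. Z x = 1} = 1"
proof -
  interpret prob_space M by (rule assms(1))
  have "measure M ({x \<in> space M. Z x = 0} \<union> {x \<in> space M. Z x = 1})
      = measure M {x \<in> space M. Z x = 0} + measure M {x \<in> space M. Z x = 1}"
    by (rule finite_measure_Union) (use assms(2) in auto)
  moreover have "{x \<in> space M. Z x = 0} \<union> {x \<in> space M. Z x = 1} = space M" using assms(3) by auto
  ultimately show ?thesis by (simp add: prob_space)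
qed

lemma expected_OD_affine_cells:
  fixes Y W T Z :: "'a \<Rightarrow> real"
  assumes cells: "\<And>a b. a \<in> {0,1} \<Longrightarrow> b \<in> {0,1} \<Longrightarrow>
      cexp_event M Y {x \<in> space M. T x = a \<and> Z x = b}
      = \<alpha> + \<beta> * cexp_event M W {x \<in> space M. T x = a \<and> Z x = b} + \<gamma> * a"
  shows "expected_OD M Y T Z = \<beta> * expected_OD M W T Z
           + \<gamma> * (measure M {x \<in> space M. Z x = 0} + measure M {x \<in> space M. Z x = 1})"
    and "expected_OD M Y Z T = \<beta> * expected_OD M W Z T"
proof -
  have swap: "{x \<in> space M. Z x = b \<and> T x = a} = {x \<in> space M. T x = a \<and> Z x = b}" for a b
    by auto
  show "expected_OD M Y T Z = \<beta> * expected_OD M W T Z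
           + \<gamma> * (measure M {x \<in> space M. Z x = 0} + measure M {x \<in> space M. Z x = 1})"
    unfolding expected_OD_def OD_def using cells[of 0 0] cells[of 0 1] cells[of 1 0] cells[of 1 1]
    by (simp add: algebra_simps)
  show "expected_OD M Y Z T = \<beta> * expected_OD M W Z T"
    unfolding expected_OD_def OD_def swap using cells[of 0 0] cells[of 0 1] cells[of 1 0] cells[of 1 1]
    by (simp add: algebra_simps)
qed

theorem mainTheorem2:
  fixes M :: "'a measure" and N :: "'u measure"
    and U :: "'a \<Rightarrow> 'u"
    and W Z Y21 Y12 :: "'a \<Rightarrow> real"
    and Y12p :: "real \<Rightarrow> 'a \<Rightarrow> real"
    and \<gamma>0 \<gamma>1 \<gamma>2 :: real
  assumes prob: "prob_space M"
    and meas_U: "U \<in> measurable M N"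
    and meas_W: "W \<in> borel_measurable M"
    and meas_Z: "Z \<in> borel_measurable M"
    and meas_Y21: "Y21 \<in> borel_measurable M"
    and meas_Y12: "Y12 \<in> borel_measurable M"
    and meas_Y12p: "\<forall>y\<in>{0,1}. Y12p y \<in> borel_measurable M"
    and int_W: "integrable M W"
    and int_Y12: "integrable M Y12"
    and int_Y12p: "\<forall>y\<in>{0,1}. integrable M (Y12p y)"
    and bin_Y21: "\<forall>x\<in>space M. Y21 x \<in> {0,1}"
    and bin_Z: "\<forall>x\<in>space M. Z x \<in> {0,1}"
    and consistency: "AE x in M. Y12 x = Y12p (Y21 x) x"
    and positivity_U: "AE x in M. 0 < cexp M (indicator {y\<in>space M. Y21 y = 1}) U N x
                                \<and> cexp M (indicator {y\<in>space M. Y21 y = 1}) U N x < 1"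
    and positivity_YZ: "\<forall>a\<in>{0,1}. \<forall>b\<in>{0,1}.
                          measure M {x\<in>space M. Y21 x = a \<and> Z x = b} > 0"
    and L: "\<forall>y\<in>{0,1}. cond_indep M (Y12p y) borel Y21 borel U N"
    and NC1: "cond_indep M W borel Y21 borel U N"
    and NC2: "cond_indep M Z borel Y12 borel (\<lambda>x. (Y21 x, U x)) (borel \<Otimes>\<^sub>M N)"
    and NC3: "cond_indep M Z borel W borel (\<lambda>x. (Y21 x, U x)) (borel \<Otimes>\<^sub>M N)"
    and B: "\<forall>y\<in>{0,1}. AE x in M. Y21 x = y \<longrightarrow>
              cexp M Y12 (\<lambda>x. (Y21 x, U x)) (borel \<Otimes>\<^sub>M N) x
            = cexp M (\<lambda>x. \<gamma>0 + \<gamma>1 * W x + \<gamma>2 * y) (\<lambda>x. (Y21 x, U x)) (borel \<Otimes>\<^sub>M N) x"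
    and nonzero: "expected_OD M W Z Y21 \<noteq> 0"
  shows "ACPE M Y12p 1 0
         = expected_OD M Y12 Y21 Z
           - expected_OD M W Y21 Z * expected_OD M Y12 Z Y21 / expected_OD M W Z Y21"
proof -
  interpret prob_space M by (rule prob)
  note [measurable] = meas_U meas_W meas_Z meas_Y21 meas_Y12
  define H where "H y = (\<lambda>x. (\<gamma>0 + \<gamma>2 * y) + \<gamma>1 * W x)" for y
  have affine: "(\<lambda>w. (\<gamma>0 + \<gamma>2 * y) + \<gamma>1 * w) \<in> borel_measurable borel" for y by measurable
  have H[measurable]: "H y \<in> borel_measurable M" for y unfolding H_def by measurable
  have iH: "integrable M (H y)" for y unfolding H_def using int_W by auto
  have H_eq: "H y = (\<lambda>x. \<gamma>0 + \<gamma>1 * W x + \<gamma>2 * y)" for y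
    unfolding H_def by (simp add: algebra_simps)
  have bridge: "AE x in M. Y21 x = y \<longrightarrow> cexp M Y12 (\<lambda>x. (Y21 x, U x)) (borel \<Otimes>\<^sub>M N) x
      = cexp M (H y) (\<lambda>x. (Y21 x, U x)) (borel \<Otimes>\<^sub>M N) x" if "y \<in> {0,1}" for y
    using B that unfolding H_eq by blast
  have "(\<integral>x. Y12p y x \<partial>M) = (\<integral>x. H y x \<partial>M)" if y: "y \<in> {0,1}" for y
    using y meas_Y12p int_Y12p consistency L cond_indep_compose_left[OF NC1 meas_W affine]
    by (intro integral_potential_outcome_eq_bridge[OF finite_measure meas_U meas_Y21 meas_Y12 int_Y12
        _ _ H iH _ cexp_indicator_binary_pos[OF prob meas_U meas_Y21 bin_Y21 positivity_U y] _ _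
        bridge[OF y]]) (auto simp: H_def elim: eventually_mono)
  then have tau: "ACPE M Y12p 1 0 = \<gamma>2"
    unfolding ACPE_def using int_Y12p int_W by (simp add: H_def prob_space)
  have cells: "cexp_event M Y12 {x \<in> space M. Y21 x = a \<and> Z x = b}
      = \<gamma>0 + \<gamma>1 * cexp_event M W {x \<in> space M. Y21 x = a \<and> Z x = b} + \<gamma>2 * a"
    if "a \<in> {0,1}" "b \<in> {0,1}" for a b
    using cexp_event_cell_eq_bridge[OF finite_measure meas_U meas_Y21 meas_Z meas_Y12 int_Y12 H iH NC2
        cond_indep_compose_right[OF NC3 meas_W affine, folded H_def] bridge[OF that(1)]]
      cexp_event_affine[OF finite_measure int_W, of "{x \<in> space M. Y21 x = a \<and> Z x = b}"]
      positivity_YZ that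
    by (fastforce simp: H_def)
  have "expected_OD M Y12 Y21 Z = \<gamma>1 * expected_OD M W Y21 Z + \<gamma>2"
    using expected_OD_affine_cells(1)[of M Y12 Y21 Z, OF cells]
      measure_binary_level_sets[OF prob meas_Z bin_Z] by simp
  moreover have "expected_OD M Y12 Z Y21 = \<gamma>1 * expected_OD M W Z Y21"
    by (rule expected_OD_affine_cells(2)[of M Y12 Y21 Z, OF cells])
  ultimately show ?thesis using tau nonzero by (simp add: field_simps)
qed

end
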